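(* Let $G$ be any group and $E$ a real Banach space. Then: (1) $KAM(G;E)\subseteq KJ(G;E)$, $PAM(G;E)\subseteq PJ(G;E)$, and $\mathrm{Hom}(G;E)\subseteq J_0(G;E)$. (2) If $f\in PJ(G;E)$ and $f(xy)=f(yx)$ for all $x,y\in G$, then $f\in PAM(G;E)$.
   Context: $KJ(G;E)$: functions $f\colon G\to E$ such that for some $c>0$, $\|f(xy)+f(xy^{-1})-2f(x)\|\le c$ for all $x,y\in G$. $PJ(G;E)$: those $f\in KJ(G;E)$ with $f(x^n)=nf(x)$ for all $x\in G,n\in\mathbb{Z}$. $J_0(G;E)$: functions $f\colon G\to E$ with $f(xy)+f(xy^{-1})=2f(x)$ for all $x,y$ and $f(1)=0$. $KAM(G;E)$: functions $f\colon G\to E$ such that $\{f(xy)-f(x)-f(y): x,y\in G\}$ is bounded. $PAM(G;E)$: those $f\in KAM(G;E)$ with $f(x^n)=nf(x)$ for all $x\in G$, $n\in\mathbb{Z}$. $\mathrm{Hom}(G;E)$: homomorphisms from $G$ to the additive group of $E$. *)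

theory Defs
  imports "HOL-Analysis.Analysis"
begin

text \<open>The group G is written additively via the type class group_add (which is NOT
assumed commutative): the product xy is x + y, the inverse y^{-1} is - y, the unit is 0.
Integer powers x^n are defined by gpow.\<close>

definition gpow :: "'g::group_add \<Rightarrow> int \<Rightarrow> 'g" where
  "gpow x n = (if 0 \<le> n then ((\<lambda>z. x + z) ^^ nat n) 0 else ((\<lambda>z. - x + z) ^^ nat (- n)) 0)"

definition KJ :: "('g::group_add \<Rightarrow> 'e::real_normed_vector) set" where
  "KJ = {f. \<exists>c>0. \<forall>x y. norm (f (x + y) + f (x + - y) - 2 *\<^sub>R f x) \<le> c}"

definition PJ :: "('g::group_add \<Rightarrow> 'e::real_normed_vector) set" where
  "PJ = {f \<in> KJ. \<forall>x n. f (gpow x n) = of_int n *\<^sub>R f x}"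

definition J0 :: "('g::group_add \<Rightarrow> 'e::real_normed_vector) set" where
  "J0 = {f. (\<forall>x y. f (x + y) + f (x + - y) = 2 *\<^sub>R f x) \<and> f 0 = 0}"

definition KAM :: "('g::group_add \<Rightarrow> 'e::real_normed_vector) set" where
  "KAM = {f. bounded {f (x + y) - f x - f y | x y. True}}"

definition PAM :: "('g::group_add \<Rightarrow> 'e::real_normed_vector) set" where
  "PAM = {f \<in> KAM. \<forall>x n. f (gpow x n) = of_int n *\<^sub>R f x}"

definition Hom :: "('g::group_add \<Rightarrow> 'e::real_normed_vector) set" where
  "Hom = {f. \<forall>x y. f (x + y) = f x + f y}"

end

theory Submission
  imports Defs
begin

text \<open>For (1), the Jensen defect f(x + y) + f(x - y) - 2 f(x) is the sum of the
quasimorphism defects at (x, y) and (x, -y) plus f(y) + f(-y), which is itself a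
quasimorphism defect up to f(0). For (2), homogeneity makes f odd, and oddness together
with f(x + y) = f(y + x) shows that twice the quasimorphism defect at (x, y) is the sum of the
Jensen defects at (x, y) and (y, x).\<close>

lemma KAM_iff_defect_bounded:
  "f \<in> KAM \<longleftrightarrow> (\<exists>B. \<forall>x y. norm (f (x + y) - f x - f y) \<le> B)"
  unfolding KAM_def bounded_iff by blast

lemma KAM_subset_KJ: "(KAM :: ('g::group_add \<Rightarrow> 'e::real_normed_vector) set) \<subseteq> KJ"
proof
  fix f :: "'g \<Rightarrow> 'e"
  assume "f \<in> KAM"
  then obtain B where B: "\<And>x y. norm (f (x + y) - f x - f y) \<le> B"
    unfolding KAM_iff_defect_bounded by blast
  have B_nonneg: "0 \<le> B"
    using B[of 0 0] norm_ge_zero order_trans by blast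
  have f_zero: "norm (f 0) \<le> B"
    using B[of 0 0] by (simp add: norm_minus_commute)
  have inverse_sum: "norm (f y + f (- y)) \<le> 2 * B" for y
  proof -
    have "f y + f (- y) = f 0 - (f (y + - y) - f y - f (- y))"
      by simp
    also have "norm \<dots> \<le> norm (f 0) + norm (f (y + - y) - f y - f (- y))"
      by (rule norm_triangle_ineq4)
    finally show ?thesis
      using f_zero B[of y "- y"] by simp
  qed
  have "norm (f (x + y) + f (x + - y) - 2 *\<^sub>R f x) \<le> 4 * B + 1" for x y
  proof -
    have "f (x + y) + f (x + - y) - 2 *\<^sub>R f x =
        (f (x + y) - f x - f y) + (f (x + - y) - f x - f (- y)) + (f y + f (- y))"
      by (simp add: scaleR_2 algebra_simps)
    also have "norm \<dots> \<le> norm (f (x + y) - f x - f y) + norm (f (x + - y) - f x - f (- y))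
        + norm (f y + f (- y))"
      by (meson norm_triangle_ineq order_trans add_right_mono)
    finally show ?thesis
      using B[of x y] B[of x "- y"] inverse_sum[of y] by simp
  qed
  with B_nonneg show "f \<in> KJ"
    unfolding KJ_def by (intro CollectI exI[of _ "4 * B + 1"]) auto
qed

lemma PAM_subset_PJ: "(PAM :: ('g::group_add \<Rightarrow> 'e::real_normed_vector) set) \<subseteq> PJ"
  using KAM_subset_KJ unfolding PAM_def PJ_def by blast

lemma Hom_subset_J0: "(Hom :: ('g::group_add \<Rightarrow> 'e::real_normed_vector) set) \<subseteq> J0"
proof
  fix f :: "'g \<Rightarrow> 'e"
  assume "f \<in> Hom"
  then have add: "\<And>x y. f (x + y) = f x + f y"
    unfolding Hom_def by blast
  have zero: "f 0 = 0"
    using add[of 0 0] by simp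
  have minus: "f (- y) = - f y" for y
    using add[of y "- y"] zero by (simp add: eq_neg_iff_add_eq_0 add.commute)
  have "f (x + y) + f (x + - y) = 2 *\<^sub>R f x" for x y
    by (simp only: add minus scaleR_2) (simp add: algebra_simps)
  with zero show "f \<in> J0"
    unfolding J0_def by blast
qed

lemma gpow_minus_one: "gpow x (- 1) = - x"
  by (simp add: gpow_def)

lemma odd_if_gpow_homogeneous:
  assumes "\<And>x n. f (gpow x n) = of_int n *\<^sub>R f x"
  shows "f (- x) = - (f x :: 'e::real_vector)"
  using assms[of x "- 1"] by (simp add: gpow_minus_one)

lemma double_defect_eq_Jensen_defects:
  fixes f :: "'g::group_add \<Rightarrow> 'e::real_vector"
  assumes odd: "\<And>x. f (- x) = - f x"
    and conj: "f (y + x) = f (x + y)"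
  shows "2 *\<^sub>R (f (x + y) - f x - f y) =
    (f (x + y) + f (x + - y) - 2 *\<^sub>R f x) + (f (y + x) + f (y + - x) - 2 *\<^sub>R f y)"
proof -
  have "f (y + - x) = - f (x + - y)"
    using odd[of "x + - y"] by (simp add: minus_add)
  with conj show ?thesis
    by (simp add: algebra_simps scaleR_2)
qed

lemma PJ_commuting_in_PAM:
  fixes f :: "'g::group_add \<Rightarrow> 'e::real_normed_vector"
  assumes "f \<in> PJ"
    and conj: "\<And>x y. f (x + y) = f (y + x)"
  shows "f \<in> PAM"
proof -
  obtain c where c: "\<And>x y. norm (f (x + y) + f (x + - y) - 2 *\<^sub>R f x) \<le> c"
    using \<open>f \<in> PJ\<close> unfolding PJ_def KJ_def by blast
  have homogeneous: "\<And>x n. f (gpow x n) = of_int n *\<^sub>R f x"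
    using \<open>f \<in> PJ\<close> unfolding PJ_def by blast
  have "norm (f (x + y) - f x - f y) \<le> c" for x y
  proof -
    have "2 * norm (f (x + y) - f x - f y) \<le>
        norm (f (x + y) + f (x + - y) - 2 *\<^sub>R f x) + norm (f (y + x) + f (y + - x) - 2 *\<^sub>R f y)"
      using double_defect_eq_Jensen_defects[OF odd_if_gpow_homogeneous[OF homogeneous] conj[symmetric]]
      by (metis norm_scaleR norm_triangle_ineq abs_numeral)
    then show ?thesis
      using c[of x y] c[of y x] by simp
  qed
  then have "f \<in> KAM"
    unfolding KAM_iff_defect_bounded by blast
  with homogeneous show "f \<in> PAM"
    unfolding PAM_def by blast
qed

theorem theorem2p16:
  shows "((KAM :: ('g::group_add \<Rightarrow> 'e::banach) set) \<subseteq> KJ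
          \<and> (PAM :: ('g \<Rightarrow> 'e) set) \<subseteq> PJ
          \<and> (Hom :: ('g \<Rightarrow> 'e) set) \<subseteq> J0)
       \<and> (\<forall>f :: 'g \<Rightarrow> 'e. f \<in> PJ \<and> (\<forall>x y. f (x + y) = f (y + x)) \<longrightarrow> f \<in> PAM)"
  using KAM_subset_KJ PAM_subset_PJ Hom_subset_J0 PJ_commuting_in_PAM by blast

end
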